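(* For every integer $n\ge 1$, let $M_T(n)$ denote the maximum modulus of an independence root over all trees on $n$ vertices. Then $$M_T(n)\le \begin{cases} 2^{\frac{n-1}{2}}+\frac{n-1}{2} & \text{if } n \text{ is odd},\\ 2^{\frac{n-2}{2}}+\frac{n}{2} & \text{if } n \text{ is even}.\end{cases}$$
   Context: For a finite simple graph $G$, the independence polynomial is $i(G,x)=\sum_{k=0}^{\alpha(G)} i_k x^k$, where $i_k$ is the number of independent sets of size $k$ in $G$ (with $i_0=1$) and $\alpha(G)$ is the independence number. Its complex roots are the independence roots of $G$. *)

theory Defs
  imports "HOL-Analysis.Analysis" "HOL-Computational_Algebra.Polynomial"
begin

definition simple_graph :: "'a set \<Rightarrow> 'a set set \<Rightarrow> bool" where
  "simple_graph V E \<longleftrightarrow> finite V \<and> (\<forall>e\<in>E. e \<subseteq> V \<and> card e = 2)"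

definition adj :: "'a set set \<Rightarrow> 'a \<Rightarrow> 'a \<Rightarrow> bool" where
  "adj E u v \<longleftrightarrow> {u, v} \<in> E"

definition connected_graph :: "'a set \<Rightarrow> 'a set set \<Rightarrow> bool" where
  "connected_graph V E \<longleftrightarrow>
     (\<forall>u\<in>V. \<forall>v\<in>V. (u, v) \<in> {(x, y). adj E x y}\<^sup>*)"

definition is_cycle :: "'a set set \<Rightarrow> 'a list \<Rightarrow> bool" where
  "is_cycle E cs \<longleftrightarrow> length cs \<ge> 3 \<and> distinct cs \<and>
     (\<forall>i < length cs - 1. adj E (cs ! i) (cs ! Suc i)) \<and> adj E (last cs) (hd cs)"

definition acyclic_graph :: "'a set \<Rightarrow> 'a set set \<Rightarrow> bool" where
  "acyclic_graph V E \<longleftrightarrow> \<not> (\<exists>cs. set cs \<subseteq> V \<and> is_cycle E cs)"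

definition is_tree :: "'a set \<Rightarrow> 'a set set \<Rightarrow> bool" where
  "is_tree V E \<longleftrightarrow> simple_graph V E \<and> V \<noteq> {} \<and> connected_graph V E \<and> acyclic_graph V E"

definition independent_set :: "'a set \<Rightarrow> 'a set set \<Rightarrow> 'a set \<Rightarrow> bool" where
  "independent_set V E S \<longleftrightarrow> S \<subseteq> V \<and> (\<forall>u\<in>S. \<forall>v\<in>S. \<not> adj E u v)"

definition indep_poly :: "'a set \<Rightarrow> 'a set set \<Rightarrow> complex poly" where
  "indep_poly V E = (\<Sum>k\<le>card V. monom (of_nat (card {S. independent_set V E S \<and> card S = k})) k)"

definition independence_root :: "'a set \<Rightarrow> 'a set set \<Rightarrow> complex \<Rightarrow> bool" where
  "independence_root V E z \<longleftrightarrow> poly (indep_poly V E) z = 0"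

end

theory Submission
  imports Defs
begin

(* Write i_k(W) for the number of independent sets of size k in the forest induced on W.
   Deleting a vertex u gives i_{k+1}(W) = i_{k+1}(W - u) + i_k(W - N[u]).  Applying this at an
   isolated vertex, or at a leaf u and then at its neighbour v, an induction over subforests shows
   i_k <= B(n) i_{k+1} whenever i_{k+1} > 0, where B(n) = 2^floor((n-1)/2) + floor(n/2); the power
   of two enters through the bound 2^floor(n/2) on the number of maximum independent sets of a
   forest on n vertices.  So the coefficients i_k B(n)^k of i(T, B(n) x) are nondecreasing up to
   the independence number, and by the Enestrom-Kakeya theorem all roots of i(T, B(n) x) lie in the
   closed unit disc. *)

definition neighbours :: "'a set \<Rightarrow> 'a set set \<Rightarrow> 'a \<Rightarrow> 'a set" where
  "neighbours W E u = {w \<in> W. adj E u w}"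

definition indep_count :: "'a set \<Rightarrow> 'a set set \<Rightarrow> nat \<Rightarrow> nat" where
  "indep_count W E k = card {S. independent_set W E S \<and> card S = k}"

definition indep_number :: "'a set \<Rightarrow> 'a set set \<Rightarrow> nat" where
  "indep_number W E = Max (card ` Collect (independent_set W E))"

lemma adj_commute: "adj E u v \<longleftrightarrow> adj E v u"
  by (simp add: adj_def insert_commute)

lemma acyclic_graph_subset: "acyclic_graph W E \<Longrightarrow> U \<subseteq> W \<Longrightarrow> acyclic_graph U E"
  unfolding acyclic_graph_def by blast

lemma finite_independent_sets: "finite W \<Longrightarrow> finite (Collect (independent_set W E))"
  by (rule finite_subset[of _ "Pow W"]) (auto simp: independent_set_def)

lemma indep_count_0: "finite W \<Longrightarrow> indep_count W E 0 = 1"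
proof -
  assume "finite W"
  then have "{S. independent_set W E S \<and> card S = 0} = {{}}"
    by (auto simp: independent_set_def dest: rev_finite_subset)
  then show ?thesis
    by (simp add: indep_count_def)
qed

lemma indep_count_mono: "finite W \<Longrightarrow> U \<subseteq> W \<Longrightarrow> indep_count U E k \<le> indep_count W E k"
  unfolding indep_count_def
  by (intro card_mono) (auto simp: finite_independent_sets independent_set_def)

lemma indep_count_posE:
  assumes "0 < indep_count W E k"
  obtains S where "independent_set W E S" and "card S = k"
  using assms that by (force simp: indep_count_def card_gt_0_iff)

lemma indep_count_pos_if_card_le:
  assumes "finite W" and "independent_set W E S" and "k \<le> card S"
  shows "0 < indep_count W E k"
proof -
  have "finite S"
    using assms(1,2) by (auto simp: independent_set_def dest: rev_finite_subset)
  then obtain T where "T \<subseteq> S" and "card T = k"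
    using assms(3) obtain_subset_with_card_n by metis
  then have "T \<in> {S. independent_set W E S \<and> card S = k}"
    using assms(2) by (auto simp: independent_set_def)
  then show ?thesis
    unfolding indep_count_def using assms(1) by (auto simp: finite_independent_sets card_gt_0_iff)
qed

lemma indep_number_le_card: "finite W \<Longrightarrow> indep_number W E \<le> card W"
  unfolding indep_number_def
  by (auto simp: finite_independent_sets independent_set_def card_mono
      intro!: Max.boundedI[of "card ` Collect (independent_set W E)"] exI[of _ "{}"])

lemma indep_count_pos_iff:
  assumes "finite W"
  shows "0 < indep_count W E k \<longleftrightarrow> k \<le> indep_number W E"
proof
  assume "0 < indep_count W E k"
  then show "k \<le> indep_number W E"
    unfolding indep_number_def using assms
    by (auto elim!: indep_count_posE simp: finite_independent_sets)
next
  have "{} \<in> Collect (independent_set W E)"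
    by (simp add: independent_set_def)
  then have "indep_number W E \<in> card ` Collect (independent_set W E)"
    unfolding indep_number_def using assms by (intro Max_in) (auto simp: finite_independent_sets)
  then obtain S where "independent_set W E S" and "card S = indep_number W E"
    by auto
  then show "k \<le> indep_number W E \<Longrightarrow> 0 < indep_count W E k"
    using assms indep_count_pos_if_card_le by metis
qed

lemma indep_count_pos_imp_le_card: "finite W \<Longrightarrow> 0 < indep_count W E k \<Longrightarrow> k \<le> card W"
  using indep_count_pos_iff indep_number_le_card le_trans by blast

lemma indep_count_pos_Diff_edge:
  assumes "finite W" and "adj E u v" and "0 < indep_count W E (Suc k)"
  shows "0 < indep_count (W - {u, v}) E k"
proof -
  obtain S where S: "independent_set W E S" "card S = Suc k"
    using assms(3) by (rule indep_count_posE)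
  have "\<not> {u, v} \<subseteq> S"
    using S(1) assms(2) by (auto simp: independent_set_def)
  then have "card (S \<inter> {u, v}) \<le> 1"
    by (cases "u \<in> S"; cases "v \<in> S") auto
  then have "k \<le> card (S - {u, v})"
    using S(2) by (simp add: card_Diff_subset_Int Int_commute)
  moreover have "independent_set (W - {u, v}) E (S - {u, v})"
    using S(1) by (auto simp: independent_set_def)
  ultimately show ?thesis
    using assms(1) indep_count_pos_if_card_le by blast
qed

lemma poly_indep_poly:
  assumes "finite V"
  shows "poly (indep_poly V E) z = (\<Sum>k\<le>indep_number V E. of_nat (indep_count V E k) * z ^ k)"
proof -
  have "poly (indep_poly V E) z = (\<Sum>k\<le>card V. of_nat (indep_count V E k) * z ^ k)"
    by (simp add: indep_poly_def indep_count_def poly_sum poly_monom)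
  also have "\<dots> = (\<Sum>k\<le>indep_number V E. of_nat (indep_count V E k) * z ^ k)"
    using indep_number_le_card[OF assms] indep_count_pos_iff[OF assms]
    by (intro sum.mono_neutral_right) auto
  finally show ?thesis .
qed

locale loopless =
  fixes E :: "'a set set"
  assumes no_loop [simp]: "\<not> adj E x x"

lemma simple_graph_loopless: "simple_graph V E \<Longrightarrow> loopless E"
  by unfold_locales (auto simp: simple_graph_def adj_def)

context loopless
begin

lemma indep_count_Suc:
  assumes "finite W" and "u \<in> W"
  shows "indep_count W E (Suc k) =
    indep_count (W - {u}) E (Suc k) + indep_count (W - insert u (neighbours W E u)) E k"
proof -
  let ?I = "\<lambda>U j. {S. independent_set U E S \<and> card S = j}"
  let ?R = "W - insert u (neighbours W E u)"
  have split: "?I W (Suc k) = ?I (W - {u}) (Suc k) \<union> insert u ` ?I ?R k"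
  proof (intro equalityI subsetI)
    fix S assume S: "S \<in> ?I W (Suc k)"
    show "S \<in> ?I (W - {u}) (Suc k) \<union> insert u ` ?I ?R k"
    proof (cases "u \<in> S")
      case True
      then have "S - {u} \<in> ?I ?R k" and "S = insert u (S - {u})"
        using S by (auto simp: independent_set_def neighbours_def)
      then show ?thesis
        by blast
    qed (use S in \<open>auto simp: independent_set_def\<close>)
  next
    fix S assume "S \<in> ?I (W - {u}) (Suc k) \<union> insert u ` ?I ?R k"
    then show "S \<in> ?I W (Suc k)"
      using assms by (auto simp: independent_set_def neighbours_def adj_commute
          card_insert_if finite_subset)
  qed
  have "?I (W - {u}) (Suc k) \<inter> insert u ` ?I ?R k = {}"
    by (auto simp: independent_set_def)
  moreover have "inj_on (insert u) (?I ?R k)"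
    by (rule inj_onI) (auto simp: independent_set_def)
  ultimately show ?thesis
    unfolding indep_count_def split using assms(1)
    by (simp add: card_Un_disjoint card_image finite_independent_sets)
qed

lemma leaf_neighbour:
  assumes "u \<in> W" and "neighbours W E u = {v}"
  shows "v \<in> W" and "v \<noteq> u" and "adj E u v" and "u \<in> neighbours W E v"
proof -
  have "v \<in> W \<and> adj E u v"
    using assms(2) by (auto simp: neighbours_def)
  then show "v \<in> W" and "adj E u v" and "v \<noteq> u" and "u \<in> neighbours W E v"
    using assms(1) by (auto simp: neighbours_def adj_commute)
qed

lemma indep_count_isolated:
  assumes "finite W" and "u \<in> W" and "neighbours W E u = {}"
  shows "indep_count W E (Suc k) = indep_count (W - {u}) E (Suc k) + indep_count (W - {u}) E k"
  using indep_count_Suc[OF assms(1,2)] assms(3) by simp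

lemma indep_count_leaf:
  assumes "finite W" and "u \<in> W" and "neighbours W E u = {v}"
  shows "indep_count W E (Suc k) = indep_count (W - {u}) E (Suc k) + indep_count (W - {u, v}) E k"
    and "indep_count (W - {u}) E (Suc k) =
      indep_count (W - {u, v}) E (Suc k) + indep_count (W - insert v (neighbours W E v)) E k"
proof -
  show "indep_count W E (Suc k) = indep_count (W - {u}) E (Suc k) + indep_count (W - {u, v}) E k"
    using indep_count_Suc[OF assms(1,2)] assms(3) by simp
  have "W - {u} - {v} = W - {u, v}"
    and "W - {u} - insert v (neighbours (W - {u}) E v) = W - insert v (neighbours W E v)"
    using leaf_neighbour(4)[OF assms(2,3)] by (auto simp: neighbours_def)
  then show "indep_count (W - {u}) E (Suc k) =
      indep_count (W - {u, v}) E (Suc k) + indep_count (W - insert v (neighbours W E v)) E k"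
    using indep_count_Suc[of "W - {u}" v k] assms(1) leaf_neighbour(1,2)[OF assms(2,3)] by simp
qed

end

definition is_path :: "'a set \<Rightarrow> 'a set set \<Rightarrow> 'a list \<Rightarrow> bool" where
  "is_path W E ps \<longleftrightarrow> ps \<noteq> [] \<and> distinct ps \<and> set ps \<subseteq> W \<and>
     (\<forall>i. Suc i < length ps \<longrightarrow> adj E (ps ! i) (ps ! Suc i))"

lemma longest_path_exists:
  assumes "finite W" and "W \<noteq> {}"
  obtains ps where "is_path W E ps" and "\<And>qs. is_path W E qs \<Longrightarrow> length qs \<le> length ps"
proof -
  obtain x where "x \<in> W"
    using assms(2) by blast
  then have "is_path W E [x]"
    by (simp add: is_path_def)
  moreover have "length qs < Suc (card W)" if "is_path W E qs" for qs
    using that assms(1) card_mono[of W "set qs"] distinct_card[of qs] by (simp add: is_path_def)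
  ultimately show thesis
    using that Lattices_Big.ex_has_greatest_nat[of "is_path W E" "[x]" length "Suc (card W)"] by blast
qed

lemma is_path_Cons:
  assumes "is_path W E ps" and "t \<in> W" and "t \<notin> set ps" and "adj E t (hd ps)"
  shows "is_path W E (t # ps)"
  unfolding is_path_def
proof (intro conjI allI impI)
  fix i assume "Suc i < length (t # ps)"
  then show "adj E ((t # ps) ! i) ((t # ps) ! Suc i)"
    using assms(1,4) by (cases i) (auto simp: is_path_def hd_conv_nth)
qed (use assms in \<open>auto simp: is_path_def\<close>)

lemma is_cycle_take_path:
  assumes "is_path W E ps" and "2 \<le> i" and "i < length ps" and "adj E (ps ! i) (hd ps)"
  shows "is_cycle E (take (Suc i) ps)"
  unfolding is_cycle_def
proof (intro conjI allI impI)
  fix j assume "j < length (take (Suc i) ps) - 1"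
  then show "adj E (take (Suc i) ps ! j) (take (Suc i) ps ! Suc j)"
    using assms(1,3) by (simp add: is_path_def)
next
  have "last (take (Suc i) ps) = ps ! i"
    using assms(3) by (simp add: take_Suc_conv_app_nth)
  then show "adj E (last (take (Suc i) ps)) (hd (take (Suc i) ps))"
    using assms(4) by simp
qed (use assms in \<open>auto simp: is_path_def\<close>)

text \<open>The first vertex of a longest path is a leaf or isolated: its neighbours lie on the path by
  maximality, and any neighbour beyond the second vertex would close a cycle.\<close>

lemma (in loopless) acyclic_has_leaf:
  assumes "finite W" and "W \<noteq> {}" and "acyclic_graph W E"
  obtains u where "u \<in> W" and "neighbours W E u = {}"
    | u v where "u \<in> W" and "neighbours W E u = {v}"
proof -
  obtain ps where ps: "is_path W E ps"
    and longest: "\<And>qs. is_path W E qs \<Longrightarrow> length qs \<le> length ps"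
    using longest_path_exists[OF assms(1,2)] by blast
  have "neighbours W E (hd ps) \<subseteq> {ps ! 1}"
  proof
    fix t assume t: "t \<in> neighbours W E (hd ps)"
    have "t \<in> set ps"
    proof (rule ccontr)
      assume "t \<notin> set ps"
      then have "is_path W E (t # ps)"
        using ps t by (intro is_path_Cons) (auto simp: neighbours_def adj_commute)
      then show False
        using longest by fastforce
    qed
    then obtain i where i: "i < length ps" "ps ! i = t"
      by (auto simp: in_set_conv_nth)
    have "i \<noteq> 0"
      using i t ps by (cases i) (auto simp: neighbours_def is_path_def hd_conv_nth)
    moreover have "\<not> 2 \<le> i"
    proof
      assume "2 \<le> i"
      then have "is_cycle E (take (Suc i) ps)"
        using i t ps by (intro is_cycle_take_path) (auto simp: neighbours_def adj_commute)
      moreover have "set (take (Suc i) ps) \<subseteq> W"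
        using ps set_take_subset by (fastforce simp: is_path_def)
      ultimately show False
        using assms(3) by (auto simp: acyclic_graph_def)
    qed
    ultimately show "t \<in> {ps ! 1}"
      using i by (simp add: not_le numeral_2_eq_2 less_Suc_eq)
  qed
  moreover have "hd ps \<in> W"
    using ps by (auto simp: is_path_def)
  ultimately show thesis
    using that by (auto simp: subset_singleton_iff)
qed

definition ratio_bound :: "nat \<Rightarrow> nat" where
  "ratio_bound n = 2 ^ ((n - 1) div 2) + n div 2"

lemma ratio_bound_pos: "0 < ratio_bound n"
  by (simp add: ratio_bound_def)

lemma ratio_bound_mono: "m \<le> n \<Longrightarrow> ratio_bound m \<le> ratio_bound n"
  unfolding ratio_bound_def by (intro add_mono power_increasing div_le_mono diff_le_mono) auto

lemma ratio_bound_Suc: "1 \<le> n \<Longrightarrow> ratio_bound n + 1 \<le> ratio_bound (Suc n)"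
proof (cases "even n")
  case True
  assume "1 \<le> n"
  with True have "\<exists>m. n = 2 * m + 2"
    by presburger
  then obtain m where "n = 2 * m + 2" ..
  then show ?thesis
    by (simp add: ratio_bound_def)
next
  case False
  then obtain m where "n = 2 * m + 1"
    by (metis oddE)
  then show ?thesis
    by (simp add: ratio_bound_def)
qed

lemma ratio_bound_add_2: "1 \<le> n \<Longrightarrow> ratio_bound (n + 2) = ratio_bound n + 2 ^ ((n - 1) div 2) + 1"
proof -
  assume "1 \<le> n"
  then have "(n + 1) div 2 = Suc ((n - 1) div 2)"
    by presburger
  then show ?thesis
    by (simp add: ratio_bound_def)
qed

lemma real_ratio_bound:
  assumes "1 \<le> n"
  shows "real (ratio_bound n) = (if odd n then 2 powr ((real n - 1) / 2) + (real n - 1) / 2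
                                 else 2 powr ((real n - 2) / 2) + real n / 2)"
proof (cases "odd n")
  case True
  then obtain m where "n = 2 * m + 1"
    by (metis oddE)
  then show ?thesis
    by (simp add: ratio_bound_def powr_realpow)
next
  case False
  with assms have "\<exists>m. n = 2 * m + 2"
    by presburger
  then obtain m where "n = 2 * m + 2" ..
  then show ?thesis
    by (simp add: ratio_bound_def powr_realpow)
qed

context loopless
begin

lemma indep_count_last_leaf_step:
  assumes "finite W" and "u \<in> W" and "neighbours W E u = {v}"
    and IH: "\<And>U j. U \<subset> W \<Longrightarrow> indep_count U E (Suc j) = 0 \<Longrightarrow>
               indep_count U E j \<le> 2 ^ (card U div 2)"
    and zero: "indep_count W E (Suc (Suc k)) = 0"
  shows "indep_count W E (Suc k) \<le> 2 ^ (card W div 2)"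
proof -
  let ?U = "W - {u, v}" and ?R = "W - insert v (neighbours W E v)"
  note v = leaf_neighbour[OF assms(2,3)]
  note rec1 = indep_count_leaf(1)[OF assms(1-3)] and rec2 = indep_count_leaf(2)[OF assms(1-3)]
  have "?R \<subseteq> ?U"
    using v(4) by blast
  have U0: "indep_count ?U E (Suc k) = 0"
    using rec1[of "Suc k"] zero by simp
  then have R0: "indep_count ?R E (Suc k) = 0"
    using indep_count_mono[OF _ \<open>?R \<subseteq> ?U\<close>, of E "Suc k"] assms(1) by simp
  have "?U \<subset> W" "?R \<subset> W"
    using assms(2) v(1) by auto
  then have "indep_count ?U E k \<le> 2 ^ (card ?U div 2)"
    and "indep_count ?R E k \<le> 2 ^ (card ?R div 2)"
    using IH U0 R0 by auto
  moreover have "(2::nat) ^ (card ?R div 2) \<le> 2 ^ (card ?U div 2)"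
    using card_mono[OF _ \<open>?R \<subseteq> ?U\<close>] assms(1) by (intro power_increasing div_le_mono) auto
  moreover have "indep_count W E (Suc k) = indep_count ?R E k + indep_count ?U E k"
    using rec1[of k] rec2[of k] U0 by simp
  moreover have "card W = card ?U + 2"
    using assms(1,2) v(1,2) card_mono[of W "{u, v}"] by (simp add: card_Diff_subset)
  then have "(2::nat) ^ (card W div 2) = 2 * 2 ^ (card ?U div 2)"
    by simp
  ultimately show ?thesis
    by linarith
qed

lemma forest_indep_count_last_le:
  assumes "finite W" and "acyclic_graph W E" and "indep_count W E (Suc k) = 0"
  shows "indep_count W E k \<le> 2 ^ (card W div 2)"
  using assms
proof (induction W arbitrary: k rule: finite_psubset_induct)
  case (psubset W)
  have IH: "indep_count U E j \<le> 2 ^ (card U div 2)"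
    if "U \<subset> W" and "indep_count U E (Suc j) = 0" for U j
    using psubset.IH[OF that(1) _ that(2)] acyclic_graph_subset[OF psubset.prems(1)] that(1) by blast
  show ?case
  proof (cases k)
    case 0
    then show ?thesis
      using indep_count_0[OF psubset.hyps] by simp
  next
    case (Suc j)
    show ?thesis
    proof (cases "W = {}")
      case True
      then show ?thesis
        using Suc indep_count_pos_imp_le_card[OF psubset.hyps, of E k] by (cases "indep_count W E k") auto
    next
      case False
      then show ?thesis
      proof (cases rule: acyclic_has_leaf[OF psubset.hyps False psubset.prems(1)])
        case (1 u)
        note rec = indep_count_isolated[OF psubset.hyps 1]
        have "indep_count (W - {u}) E (Suc j) = 0"
          using rec[of "Suc j"] psubset.prems(2) Suc by simp
        then have "indep_count W E k \<le> 2 ^ (card (W - {u}) div 2)"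
          using rec[of j] IH[of "W - {u}" j] 1(1) Suc by auto
        also have "\<dots> \<le> 2 ^ (card W div 2)"
          using psubset.hyps by (intro power_increasing div_le_mono card_mono) auto
        finally show ?thesis .
      next
        case (2 u v)
        then show ?thesis
          using indep_count_last_leaf_step[OF psubset.hyps 2 IH] psubset.prems(2) Suc by simp
      qed
    qed
  qed
qed

lemma forest_indep_count_last_le_subforest:
  assumes "finite U" and "acyclic_graph U E" and "R \<subseteq> U"
    and "indep_count R E (Suc k) = 0" and "0 < indep_count U E (Suc k)"
  shows "indep_count R E k \<le> 2 ^ ((card U - 1) div 2) * indep_count U E (Suc k)"
proof -
  have "R \<noteq> U"
    using assms(4,5) by (metis less_irrefl)
  then have "card R < card U"
    using assms(1,3) by (simp add: psubset_card_mono)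
  have "indep_count R E k \<le> 2 ^ (card R div 2)"
    using forest_indep_count_last_le[OF _ acyclic_graph_subset[OF assms(2,3)] assms(4)]
      finite_subset[OF assms(3,1)] by simp
  also have "\<dots> \<le> 2 ^ ((card U - 1) div 2)"
    using \<open>card R < card U\<close> by (intro power_increasing div_le_mono) auto
  also have "\<dots> \<le> 2 ^ ((card U - 1) div 2) * indep_count U E (Suc k)"
    using assms(5) by simp
  finally show ?thesis .
qed

lemma indep_count_ratio_isolated_step:
  assumes "finite W" and "u \<in> W" and "neighbours W E u = {}"
    and IH: "\<And>U j. U \<subset> W \<Longrightarrow> 0 < indep_count U E (Suc j) \<Longrightarrow>
               indep_count U E j \<le> ratio_bound (card U) * indep_count U E (Suc j)"
    and pos: "0 < indep_count W E (Suc (Suc k))"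
  shows "indep_count W E (Suc k) \<le> ratio_bound (card W) * indep_count W E (Suc (Suc k))"
proof -
  let ?U = "W - {u}" and ?B = "ratio_bound (card W - 1)"
  note rec = indep_count_isolated[OF assms(1-3)]
  have "?U \<subset> W" and card_U: "card ?U = card W - 1"
    using assms(1,2) by auto
  have "2 \<le> card W"
    using indep_count_pos_imp_le_card[OF assms(1) pos] by simp
  have pos_U: "0 < indep_count ?U E (Suc k)"
    using rec[of "Suc k"] pos assms(1) by (auto simp: indep_count_pos_iff)
  have h: "indep_count ?U E k \<le> ?B * indep_count ?U E (Suc k)"
    using IH[OF \<open>?U \<subset> W\<close> pos_U] card_U by simp
  show ?thesis
  proof (cases "0 < indep_count ?U E (Suc (Suc k))")
    case True
    have "indep_count ?U E (Suc k) \<le> ?B * indep_count ?U E (Suc (Suc k))"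
      using IH[OF \<open>?U \<subset> W\<close> True] card_U by simp
    then have "indep_count W E (Suc k) \<le> ?B * indep_count W E (Suc (Suc k))"
      using h rec[of k] rec[of "Suc k"] by (simp add: distrib_left)
    also have "\<dots> \<le> ratio_bound (card W) * indep_count W E (Suc (Suc k))"
      by (intro mult_right_mono ratio_bound_mono) auto
    finally show ?thesis .
  next
    case False
    then have "indep_count W E (Suc k) \<le> (?B + 1) * indep_count W E (Suc (Suc k))"
      using h rec[of k] rec[of "Suc k"] by simp
    also have "\<dots> \<le> ratio_bound (card W) * indep_count W E (Suc (Suc k))"
      using ratio_bound_Suc[of "card W - 1"] \<open>2 \<le> card W\<close>
      by (intro mult_right_mono) (auto simp: Suc_diff_Suc numeral_2_eq_2)
    finally show ?thesis .
  qed
qed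

lemma indep_count_ratio_leaf_step:
  assumes "finite W" and "acyclic_graph W E" and "u \<in> W" and "neighbours W E u = {v}"
    and IH: "\<And>U j. U \<subset> W \<Longrightarrow> 0 < indep_count U E (Suc j) \<Longrightarrow>
               indep_count U E j \<le> ratio_bound (card U) * indep_count U E (Suc j)"
    and pos: "0 < indep_count W E (Suc (Suc k))"
  shows "indep_count W E (Suc k) \<le> ratio_bound (card W) * indep_count W E (Suc (Suc k))"
proof -
  let ?U1 = "W - {u}" and ?U = "W - {u, v}" and ?R = "W - insert v (neighbours W E v)"
  note v = leaf_neighbour[OF assms(3,4)]
  note rec1 = indep_count_leaf(1)[OF assms(1,3,4)] and rec2 = indep_count_leaf(2)[OF assms(1,3,4)]
  have "?U1 \<subset> W" "?U \<subset> W" and card_U: "card W = card ?U + 2"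
    using assms(1,3) v(1,2) card_mono[of W "{u, v}"] by (auto simp: card_Diff_subset)
  have pos_U: "0 < indep_count ?U E (Suc k)"
    using indep_count_pos_Diff_edge[OF assms(1) v(3) pos] .
  have h: "indep_count ?U E k \<le> ratio_bound (card ?U) * indep_count ?U E (Suc k)"
    using IH[OF \<open>?U \<subset> W\<close> pos_U] .
  show ?thesis
  proof (cases "0 < indep_count ?U1 E (Suc (Suc k))")
    case True
    have "card ?U1 \<le> card W" "card ?U \<le> card W"
      using card_mono[OF assms(1), of ?U1] card_U by auto
    then have "ratio_bound (card ?U1) \<le> ratio_bound (card W)"
      and "ratio_bound (card ?U) \<le> ratio_bound (card W)"
      by (simp_all add: ratio_bound_mono)
    then have "indep_count ?U1 E (Suc k) \<le> ratio_bound (card W) * indep_count ?U1 E (Suc (Suc k))"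
      and "indep_count ?U E k \<le> ratio_bound (card W) * indep_count ?U E (Suc k)"
      using order_trans[OF IH[OF \<open>?U1 \<subset> W\<close> True] mult_right_mono]
        order_trans[OF h mult_right_mono] by simp_all
    then show ?thesis
      using rec1[of k] rec1[of "Suc k"] by (simp add: distrib_left)
  next
    case False
    then have R0: "indep_count ?R E (Suc k) = 0"
      using rec2[of "Suc k"] by simp
    have "?R \<subseteq> ?U"
      using v(4) by blast
    then have "indep_count ?R E k \<le> 2 ^ ((card ?U - 1) div 2) * indep_count ?U E (Suc k)"
      using forest_indep_count_last_le_subforest[OF _ _ _ R0 pos_U] assms(1,2) acyclic_graph_subset
      by blast
    moreover have "1 \<le> card ?U"
      using pos_U indep_count_pos_imp_le_card[of ?U E "Suc k"] assms(1) by simp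
    ultimately have "indep_count W E (Suc k) \<le> ratio_bound (card ?U + 2) * indep_count ?U E (Suc k)"
      using h rec1[of k] rec2[of k] ratio_bound_add_2 by (simp add: algebra_simps)
    then show ?thesis
      using card_U rec1[of "Suc k"] False by simp
  qed
qed

lemma forest_indep_count_ratio:
  assumes "finite W" and "acyclic_graph W E" and "0 < indep_count W E (Suc k)"
  shows "indep_count W E k \<le> ratio_bound (card W) * indep_count W E (Suc k)"
  using assms
proof (induction W arbitrary: k rule: finite_psubset_induct)
  case (psubset W)
  have IH: "indep_count U E j \<le> ratio_bound (card U) * indep_count U E (Suc j)"
    if "U \<subset> W" and "0 < indep_count U E (Suc j)" for U j
    using psubset.IH[OF that(1) _ that(2)] acyclic_graph_subset[OF psubset.prems(1)] that(1) by blast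
  show ?case
  proof (cases k)
    case 0
    have "1 \<le> ratio_bound (card W) * indep_count W E (Suc 0)"
      using psubset.prems(2) 0 ratio_bound_pos by (simp add: Suc_le_eq)
    then show ?thesis
      using 0 indep_count_0[OF psubset.hyps] by simp
  next
    case (Suc j)
    have "W \<noteq> {}"
      using indep_count_pos_imp_le_card[OF psubset.hyps psubset.prems(2)] by auto
    show ?thesis
    proof (cases rule: acyclic_has_leaf[OF psubset.hyps \<open>W \<noteq> {}\<close> psubset.prems(1)])
      case (1 u)
      then show ?thesis
        using indep_count_ratio_isolated_step[OF psubset.hyps 1 IH] psubset.prems(2) Suc by simp
    next
      case (2 u v)
      then show ?thesis
        using indep_count_ratio_leaf_step[OF psubset.hyps psubset.prems(1) 2 IH] psubset.prems(2) Suc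
        by simp
    qed
  qed
qed

end

lemma one_minus_mult_sum_telescope:
  fixes b :: "nat \<Rightarrow> real" and w :: complex
  shows "(1 - w) * (\<Sum>k\<le>d. of_real (b k) * w ^ k) =
    of_real (b 0) + (\<Sum>k<d. of_real (b (Suc k) - b k) * w ^ Suc k) - of_real (b d) * w ^ Suc d"
  by (induction d) (simp_all add: algebra_simps)

theorem enestrom_kakeya:
  fixes b :: "nat \<Rightarrow> real" and w :: complex
  assumes root: "(\<Sum>k\<le>d. of_real (b k) * w ^ k) = 0"
    and "0 \<le> b 0" and mono: "\<And>k. k < d \<Longrightarrow> b k \<le> b (Suc k)" and "0 < b d"
  shows "norm w \<le> 1"
proof (rule ccontr)
  assume "\<not> norm w \<le> 1"
  then have r: "1 < norm w"
    by simp
  have eq: "of_real (b d) * w ^ Suc d = of_real (b 0) + (\<Sum>k<d. of_real (b (Suc k) - b k) * w ^ Suc k)"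
    using one_minus_mult_sum_telescope[of w b d] root by (simp add: algebra_simps)
  have "b d * norm w ^ Suc d = norm (of_real (b d) * w ^ Suc d)"
    using \<open>0 < b d\<close> by (simp add: norm_mult norm_power)
  also have "\<dots> \<le> norm (of_real (b 0) :: complex) + (\<Sum>k<d. norm (of_real (b (Suc k) - b k) * w ^ Suc k))"
    unfolding eq by (intro order_trans[OF norm_triangle_ineq] add_left_mono norm_sum)
  also have "\<dots> = b 0 + (\<Sum>k<d. (b (Suc k) - b k) * norm w ^ Suc k)"
    using assms(2) mono by (auto simp: norm_mult norm_power simp del: of_real_diff intro!: sum.cong)
  also have "\<dots> \<le> b 0 * norm w ^ d + (\<Sum>k<d. (b (Suc k) - b k) * norm w ^ d)"
    using assms(2) r mono
    by (intro add_mono sum_mono mult_left_mono power_increasing mult_le_cancel_left1[THEN iffD2] one_le_power)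
      auto
  also have "\<dots> = b d * norm w ^ d"
    by (simp only: sum_distrib_right[symmetric] sum_lessThan_telescope) (simp add: algebra_simps)
  finally have "norm w * norm w ^ d \<le> norm w ^ d"
    using \<open>0 < b d\<close> by simp
  moreover have "0 < norm w ^ d"
    using r by (intro zero_less_power) linarith
  ultimately show False
    using r by (simp add: mult_le_cancel_right2)
qed

corollary enestrom_kakeya_scaled:
  fixes a :: "nat \<Rightarrow> real" and z :: complex
  assumes root: "(\<Sum>k\<le>d. of_real (a k) * z ^ k) = 0"
    and "0 < C" and "0 \<le> a 0" and ratio: "\<And>k. k < d \<Longrightarrow> a k \<le> C * a (Suc k)" and "0 < a d"
  shows "norm z \<le> C"
proof -
  let ?b = "\<lambda>k. a k * C ^ k" and ?w = "z / of_real C"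
  have "of_real (?b k) * ?w ^ k = of_real (a k) * z ^ k" for k
    using \<open>0 < C\<close> by (simp add: power_divide)
  then have "(\<Sum>k\<le>d. of_real (?b k) * ?w ^ k) = 0"
    using root by (simp only:)
  moreover have "?b k \<le> ?b (Suc k)" if "k < d" for k
    using mult_right_mono[OF ratio[OF that], of "C ^ k"] \<open>0 < C\<close> by (simp add: algebra_simps)
  ultimately have "norm ?w \<le> 1"
    using enestrom_kakeya[where b = ?b and w = ?w] assms(2,3,5) by simp
  then show ?thesis
    using \<open>0 < C\<close> by (simp add: norm_divide)
qed

theorem corollary2:
  fixes n :: nat and V :: "'a set" and E :: "'a set set" and z :: complex
  assumes "n \<ge> 1" and "is_tree V E" and "card V = n" and "independence_root V E z"
  shows "norm z \<le> (if odd n then 2 powr ((real n - 1) / 2) + (real n - 1) / 2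
                   else 2 powr ((real n - 2) / 2) + real n / 2)"
proof -
  have "simple_graph V E" and acyclic: "acyclic_graph V E"
    using assms(2) by (auto simp: is_tree_def)
  then interpret loopless E
    by (intro simple_graph_loopless)
  have fin: "finite V"
    using \<open>simple_graph V E\<close> by (simp add: simple_graph_def)
  let ?\<alpha> = "indep_number V E"
  have "norm z \<le> real (ratio_bound n)"
  proof (rule enestrom_kakeya_scaled[where a = "\<lambda>k. real (indep_count V E k)" and d = ?\<alpha>])
    show "(\<Sum>k\<le>?\<alpha>. of_real (real (indep_count V E k)) * z ^ k) = 0"
      using assms(4) poly_indep_poly[OF fin] by (simp add: independence_root_def)
    show "0 < real (indep_count V E ?\<alpha>)"
      using indep_count_pos_iff[OF fin] by simp
    fix k assume "k < ?\<alpha>"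
    then show "real (indep_count V E k) \<le> real (ratio_bound n) * real (indep_count V E (Suc k))"
      using forest_indep_count_ratio[OF fin acyclic] indep_count_pos_iff[OF fin] assms(3)
      by (simp flip: of_nat_mult)
  qed (simp_all add: ratio_bound_pos)
  then show ?thesis
    using real_ratio_bound[OF assms(1)] by simp
qed

end
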